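(* Let $B>0$ and $L\ge2$. For every $f\in\mathcal{D}(B,L)$ and all $x,y\in\mathbb{R}^p$, $|f(x)-f(y)|\le\frac B4\|x-y\|_2$ and $|f(x)-f(y)|\le2$.
   Context: $\mathcal{D}(B,L)$ is the class of networks $f:\mathbb{R}^p\to\mathbb{R}$ defined as follows: first-layer nodes are $x\mapsto\sigma(w^Tx+b)$ with $\sigma(u)=1/(1+e^{-u})$, $w\in\mathbb{R}^p$, $\|w\|_2\le B$, $b\in\mathbb{R}$; for $1\le l<L-1$, a node of layer $l+1$ is $x\mapsto\max\big(\sum_{i=1}^{d^{(l)}}w_if^{(l)}_i(x),0\big)$ with $f_i^{(l)}$ nodes of layer $l$, finite width $d^{(l)}$, and $\sum_i|w_i|\le1$; the output is $f(x)=\sum_{i=1}^{d^{(L-1)}}w_if_i^{(L-1)}(x)$ with $\sum_i|w_i|\le1$. *)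

theory Defs
  imports "HOL-Analysis.Analysis"
begin

definition sigmoid :: "real \<Rightarrow> real" where
  "sigmoid u = 1 / (1 + exp (- u))"

text \<open>Nodes of layer l (l \<ge> 1) of networks in D(B,L); inputs are vectors in R^p,
  represented as real ^ 'p. Layer 0 is unused (empty).\<close>
primrec layer_nodes :: "real \<Rightarrow> nat \<Rightarrow> (real ^ ('p::finite) \<Rightarrow> real) set" where
  "layer_nodes B 0 = {}"
| "layer_nodes B (Suc l) =
     (if l = 0 then
        {(\<lambda>x. sigmoid (w \<bullet> x + b)) | (w :: real ^ 'p) b. norm w \<le> B}
      else
        {(\<lambda>x. max (\<Sum>i<d. c i * g i x) 0) | (d::nat) c g.
           0 < d \<and> (\<Sum>i<d. \<bar>c i\<bar>) \<le> 1 \<and> (\<forall>i<d. g i \<in> layer_nodes B l)})"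

definition DNN :: "real \<Rightarrow> nat \<Rightarrow> (real ^ ('p::finite) \<Rightarrow> real) set" where
  "DNN B L =
     {(\<lambda>x. \<Sum>i<d. c i * g i x) | (d::nat) c g.
        0 < d \<and> (\<Sum>i<d. \<bar>c i\<bar>) \<le> 1 \<and> (\<forall>i<d. g i \<in> layer_nodes B (L - 1))}"

end

theory Submission
  imports Defs
begin

text \<open>By induction on the layer, every node has values in [0,1] and is (B/4)-Lipschitz:
  the sigmoid has derivative \<open>\<sigma>(1 - \<sigma>) \<le> 1/4\<close>, an affine map \<open>x \<mapsto> w \<bullet> x + b\<close> with
  \<open>\<parallel>w\<parallel> \<le> B\<close> is B-Lipschitz, and neither a combination with l1-norm of weights at most 1
  nor the ReLU increases a Lipschitz constant or a bound on absolute values. The output f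
  inherits the Lipschitz bound and \<open>\<bar>f\<bar> \<le> 1\<close>, whence \<open>\<bar>f x - f y\<bar> \<le> 2\<close>.\<close>

lemma sigmoid_pos: "0 < sigmoid u"
  unfolding sigmoid_def by (simp add: add_pos_pos)

lemma sigmoid_le_one: "sigmoid u \<le> 1"
  unfolding sigmoid_def by (simp add: add_pos_pos divide_le_eq)

lemma has_real_derivative_sigmoid:
  "(sigmoid has_real_derivative sigmoid u * (1 - sigmoid u)) (at u)"
proof -
  have "1 + exp (- u) \<noteq> 0"
    using exp_gt_zero[of "- u"] by linarith
  then show ?thesis
    unfolding sigmoid_def
    by (auto intro!: derivative_eq_intros simp: field_simps power2_eq_square)
qed

lemma sigmoid_lipschitz: "(1/4)-lipschitz_on UNIV sigmoid"
proof (rule lipschitz_onI)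
  fix x y :: real
  have "\<bar>sigmoid u * (1 - sigmoid u)\<bar> \<le> 1/4" for u
  proof -
    have "0 \<le> (2 * sigmoid u - 1)\<^sup>2" by simp
    then show ?thesis
      using sigmoid_pos[of u] sigmoid_le_one[of u]
      by (simp add: abs_mult power2_eq_square algebra_simps)
  qed
  then show "dist (sigmoid x) (sigmoid y) \<le> 1/4 * dist x y"
    unfolding dist_real_def
    using field_differentiable_bound[of UNIV sigmoid "\<lambda>u. sigmoid u * (1 - sigmoid u)" "1/4" x y]
      has_real_derivative_sigmoid
    by (simp add: has_field_derivative_at_within)
qed simp

lemma lipschitz_on_inner_affine:
  fixes w :: "'a::real_inner"
  shows "(norm w)-lipschitz_on U (\<lambda>x. w \<bullet> x + b)"
proof (rule lipschitz_onI)
  fix x y :: 'a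
  have "\<bar>w \<bullet> x - w \<bullet> y\<bar> \<le> norm w * norm (x - y)"
    by (metis Cauchy_Schwarz_ineq2 inner_diff_right)
  then show "dist (w \<bullet> x + b) (w \<bullet> y + b) \<le> norm w * dist x y"
    by (simp add: dist_real_def dist_norm)
qed simp

lemma lipschitz_on_sigmoid_neuron:
  fixes w :: "'a::real_inner"
  assumes "norm w \<le> B"
  shows "(B/4)-lipschitz_on U (\<lambda>x. sigmoid (w \<bullet> x + b))"
proof -
  have "(1/4 * norm w)-lipschitz_on U (\<lambda>x. sigmoid (w \<bullet> x + b))"
    using lipschitz_on_compose2[OF lipschitz_on_inner_affine lipschitz_on_subset[OF sigmoid_lipschitz]]
    by blast
  then show ?thesis
    by (rule lipschitz_on_le) (use assms in simp)
qed

lemma lipschitz_on_max: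
  fixes f g :: "'a::metric_space \<Rightarrow> real"
  assumes "C-lipschitz_on U f" "C-lipschitz_on U g"
  shows "C-lipschitz_on U (\<lambda>x. max (f x) (g x))"
proof (rule lipschitz_onI)
  fix x y assume "x \<in> U" "y \<in> U"
  then have "dist (f x) (f y) \<le> C * dist x y" "dist (g x) (g y) \<le> C * dist x y"
    using assms by (simp_all add: lipschitz_onD)
  then show "dist (max (f x) (g x)) (max (f y) (g y)) \<le> C * dist x y"
    by (simp add: dist_real_def max_def abs_le_iff)
qed (rule lipschitz_on_nonneg[OF assms(1)])

lemma abs_sum_mult_le:
  fixes c u :: "'i \<Rightarrow> real"
  assumes "(\<Sum>i\<in>I. \<bar>c i\<bar>) \<le> 1" "\<And>i. i \<in> I \<Longrightarrow> \<bar>u i\<bar> \<le> K" "0 \<le> K"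
  shows "\<bar>\<Sum>i\<in>I. c i * u i\<bar> \<le> K"
proof -
  have "\<bar>\<Sum>i\<in>I. c i * u i\<bar> \<le> (\<Sum>i\<in>I. \<bar>c i * u i\<bar>)"
    by (rule sum_abs)
  also have "\<dots> \<le> (\<Sum>i\<in>I. \<bar>c i\<bar> * K)"
    using assms(2) by (intro sum_mono) (simp add: abs_mult mult_left_mono)
  also have "\<dots> = (\<Sum>i\<in>I. \<bar>c i\<bar>) * K"
    by (simp add: sum_distrib_right)
  also have "\<dots> \<le> K"
    using assms(1,3) by (simp add: mult_left_le_one_le)
  finally show ?thesis .
qed

lemma lipschitz_on_weighted_sum:
  fixes g :: "'i \<Rightarrow> 'a::metric_space \<Rightarrow> real"
  assumes "(\<Sum>i\<in>I. \<bar>c i\<bar>) \<le> 1" "\<And>i. i \<in> I \<Longrightarrow> K-lipschitz_on U (g i)" "0 \<le> K"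
  shows "K-lipschitz_on U (\<lambda>x. \<Sum>i\<in>I. c i * g i x)"
proof (rule lipschitz_onI)
  fix x y assume "x \<in> U" "y \<in> U"
  then have "\<bar>g i x - g i y\<bar> \<le> K * dist x y" if "i \<in> I" for i
    using lipschitz_onD[OF assms(2)[OF that]] by (simp add: dist_real_def)
  then have "\<bar>\<Sum>i\<in>I. c i * (g i x - g i y)\<bar> \<le> K * dist x y"
    using assms(1,3) by (intro abs_sum_mult_le) auto
  then show "dist (\<Sum>i\<in>I. c i * g i x) (\<Sum>i\<in>I. c i * g i y) \<le> K * dist x y"
    by (simp add: dist_real_def sum_subtractf right_diff_distrib)
qed (rule assms(3))

lemma layer_nodes_induct:
  assumes "g \<in> layer_nodes B l"
    and sigmoid: "\<And>w b. norm w \<le> B \<Longrightarrow> P (\<lambda>x. sigmoid (w \<bullet> x + b))"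
    and relu: "\<And>(d :: nat) c h. (\<Sum>i<d. \<bar>c i\<bar>) \<le> 1 \<Longrightarrow> (\<And>i. i < d \<Longrightarrow> P (h i)) \<Longrightarrow>
                 P (\<lambda>x. max (\<Sum>i<d. c i * h i x) 0)"
  shows "P g"
  using assms(1)
proof (induction l arbitrary: g)
  case (Suc l)
  show ?case
  proof (cases "l = 0")
    case True
    then show ?thesis using Suc.prems by (auto intro: sigmoid)
  next
    case False
    then obtain d :: nat and c h where "g = (\<lambda>x. max (\<Sum>i<d. c i * h i x) 0)"
      "(\<Sum>i<d. \<bar>c i\<bar>) \<le> 1" "\<And>i. i < d \<Longrightarrow> h i \<in> layer_nodes B l"
      using Suc.prems unfolding layer_nodes.simps if_not_P[OF False] mem_Collect_eq by blast
    then show ?thesis using Suc.IH by (auto intro: relu)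
  qed
qed simp

lemma layer_nodes_lipschitz:
  fixes g :: "real ^ 'p \<Rightarrow> real"
  assumes "g \<in> layer_nodes B l" "0 \<le> B"
  shows "(B/4)-lipschitz_on U g"
proof (rule layer_nodes_induct[OF assms(1)])
  fix w :: "real ^ 'p" and b
  assume "norm w \<le> B"
  then show "(B/4)-lipschitz_on U (\<lambda>x. sigmoid (w \<bullet> x + b))"
    by (rule lipschitz_on_sigmoid_neuron)
next
  fix d :: nat and c :: "nat \<Rightarrow> real" and h :: "nat \<Rightarrow> real ^ 'p \<Rightarrow> real"
  assume "(\<Sum>i<d. \<bar>c i\<bar>) \<le> 1" "\<And>i. i < d \<Longrightarrow> (B/4)-lipschitz_on U (h i)"
  then have "(B/4)-lipschitz_on U (\<lambda>x. \<Sum>i<d. c i * h i x)"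
    using assms(2) by (intro lipschitz_on_weighted_sum) auto
  moreover have "(B/4)-lipschitz_on U (\<lambda>x. 0)"
    using assms(2) by (intro lipschitz_on_le[OF lipschitz_on_constant]) simp
  ultimately show "(B/4)-lipschitz_on U (\<lambda>x. max (\<Sum>i<d. c i * h i x) 0)"
    by (rule lipschitz_on_max)
qed

lemma layer_nodes_range:
  fixes g :: "real ^ 'p \<Rightarrow> real"
  assumes "g \<in> layer_nodes B l"
  shows "0 \<le> g x \<and> g x \<le> 1"
proof (rule layer_nodes_induct[OF assms, where P = "\<lambda>g. 0 \<le> g x \<and> g x \<le> 1"])
  fix w :: "real ^ 'p" and b
  show "0 \<le> sigmoid (w \<bullet> x + b) \<and> sigmoid (w \<bullet> x + b) \<le> 1"
    using sigmoid_pos sigmoid_le_one less_imp_le by blast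
next
  fix d :: nat and c :: "nat \<Rightarrow> real" and h :: "nat \<Rightarrow> real ^ 'p \<Rightarrow> real"
  assume "(\<Sum>i<d. \<bar>c i\<bar>) \<le> 1" "\<And>i. i < d \<Longrightarrow> 0 \<le> h i x \<and> h i x \<le> 1"
  then have "\<bar>\<Sum>i<d. c i * h i x\<bar> \<le> 1"
    by (intro abs_sum_mult_le) auto
  then show "0 \<le> max (\<Sum>i<d. c i * h i x) 0 \<and> max (\<Sum>i<d. c i * h i x) 0 \<le> 1"
    by simp
qed

lemma DNN_elim:
  fixes f :: "real ^ 'p \<Rightarrow> real"
  assumes "f \<in> DNN B L"
  obtains d :: nat and c :: "nat \<Rightarrow> real" and g
  where "f = (\<lambda>x. \<Sum>i<d. c i * g i x)" "(\<Sum>i<d. \<bar>c i\<bar>) \<le> 1"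
    "\<And>i. i < d \<Longrightarrow> g i \<in> layer_nodes B (L - 1)"
  using assms unfolding DNN_def by blast

lemma DNN_lipschitz:
  fixes f :: "real ^ 'p \<Rightarrow> real"
  assumes "f \<in> DNN B L" "0 \<le> B"
  shows "(B/4)-lipschitz_on U f"
proof -
  obtain d :: nat and c :: "nat \<Rightarrow> real" and g
    where f: "f = (\<lambda>x. \<Sum>i<d. c i * g i x)" and c: "(\<Sum>i<d. \<bar>c i\<bar>) \<le> 1"
      and g: "\<And>i. i < d \<Longrightarrow> g i \<in> layer_nodes B (L - 1)"
    using DNN_elim[OF assms(1)] by blast
  have "(B/4)-lipschitz_on U (g i)" if "i < d" for i
    using layer_nodes_lipschitz[OF g[OF that] assms(2)] .
  then show ?thesis
    unfolding f using c assms(2) by (intro lipschitz_on_weighted_sum) auto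
qed

lemma DNN_abs_le_one:
  fixes f :: "real ^ 'p \<Rightarrow> real"
  assumes "f \<in> DNN B L"
  shows "\<bar>f x\<bar> \<le> 1"
proof -
  obtain d :: nat and c :: "nat \<Rightarrow> real" and g
    where f: "f = (\<lambda>x. \<Sum>i<d. c i * g i x)" and c: "(\<Sum>i<d. \<bar>c i\<bar>) \<le> 1"
      and g: "\<And>i. i < d \<Longrightarrow> g i \<in> layer_nodes B (L - 1)"
    using DNN_elim[OF assms] by blast
  have "\<bar>g i x\<bar> \<le> 1" if "i < d" for i
    using layer_nodes_range[OF g[OF that], of x] by simp
  then show ?thesis
    unfolding f using c by (intro abs_sum_mult_le) auto
qed

theorem lemma1:
  fixes B :: real and L :: nat and f :: "real ^ 'p \<Rightarrow> real" and x y :: "real ^ 'p"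
  assumes "B > 0" and "L \<ge> 2" and "f \<in> DNN B L"
  shows "\<bar>f x - f y\<bar> \<le> B / 4 * norm (x - y) \<and> \<bar>f x - f y\<bar> \<le> 2"
proof
  have "(B/4)-lipschitz_on UNIV f"
    using assms(1,3) by (intro DNN_lipschitz) auto
  then show "\<bar>f x - f y\<bar> \<le> B / 4 * norm (x - y)"
    using lipschitz_onD[of "B/4" UNIV f x y] by (simp add: dist_real_def dist_norm)
next
  show "\<bar>f x - f y\<bar> \<le> 2"
    using DNN_abs_le_one[OF assms(3), of x] DNN_abs_le_one[OF assms(3), of y] by linarith
qed

end
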